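(* Every functional $\Lambda$-system algebra over a set $\mathcal{X}$ that has unique fixed points and whose function $\Gamma$ permits reordering is connection-order invariant.
   Context: Let $\Lambda,\mathcal{X}$ be sets. For finite disjoint $\mathcal{I},\mathcal{O}\subseteq\Lambda$ let $\mathfrak{S}_{\mathcal{I},\mathcal{O}}$ be a set of functions $s:\mathcal{X}^{\mathcal{I}}\to\mathcal{X}^{\mathcal{O}}$ (where $\mathcal{X}^{\mathcal{I}}$ is the set of functions $\mathcal{I}\to\mathcal{X}$, i.e. tuples indexed by $\mathcal{I}$), and let $\mathfrak{S}$ be their union. For $s\in\mathfrak{S}_{\mathcal{I},\mathcal{O}}$, $i\in\mathcal{I}$, $o\in\mathcal{O}$, $\mathbf{x}\in\mathcal{X}^{\mathcal{I}\setminus\{i\}}$ let $\mathrm{Fix}(s,i,o,\mathbf{x}):=\{x_i\in\mathcal{X}\mid s(\mathbf{x}\cup\{(i,x_i)\})(o)=x_i\}$. Let $\Gamma$ assign to each $s\in\mathfrak{S}_{\mathcal{I},\mathcal{O}}$ a set of unordered pairs $\{i,o\}$ with $i\in\mathcal{I}$, $o\in\mathcal{O}$, such that $\mathrm{Fix}(s,i,o,\mathbf{x})\neq\emptyset$ for all $\mathbf{x}$, and for each such $s$ and $\{i,o\}\in\Gamma(s)$ let $\phi^s_{i,o}:\mathcal{X}^{\mathcal{I}\setminus\{i\}}\to\mathcal{X}$ satisfy $\phi^s_{i,o}(\mathbf{x})\in\mathrm{Fix}(s,i,o,\mathbf{x})$. Define $\lambda(s)=\mathcal{I}\cup\mathcal{O}$;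 for $s_1\in\mathfrak{S}_{\mathcal{I}_1,\mathcal{O}_1}$, $s_2\in\mathfrak{S}_{\mathcal{I}_2,\mathcal{O}_2}$ with $\mathcal{I}_1,\mathcal{I}_2,\mathcal{O}_1,\mathcal{O}_2$ pairwise disjoint, $s_1\parallel s_2:\mathcal{X}^{\mathcal{I}_1\cup\mathcal{I}_2}\to\mathcal{X}^{\mathcal{O}_1\cup\mathcal{O}_2}$ with $(s_1\parallel s_2)(\mathbf{x})(o_j)=s_j(\mathbf{x}|_{\mathcal{I}_j})(o_j)$ for $o_j\in\mathcal{O}_j$; and for $\{i,o\}\in\Gamma(s)$, $\gamma_{i,o}(s):\mathcal{X}^{\mathcal{I}\setminus\{i\}}\to\mathcal{X}^{\mathcal{O}\setminus\{o\}}$, $\gamma_{i,o}(s)(\mathbf{x})=s(\mathbf{x}\cup\{(i,\phi^s_{i,o}(\mathbf{x}))\})|_{\mathcal{O}\setminus\{o\}}$. If $\mathfrak{S}$ is closed under $\parallel$ and $\gamma$ and for all $s_1,s_2$ with $\lambda(s_1)\cap\lambda(s_2)=\emptyset$, $j\in\{1,2\}$, $i,o\in\lambda(s_j)$ we have $\{i,o\}\in\Gamma(s_1\parallel s_2)\iff\{i,o\}\in\Gamma(s_j)$, then $(\mathfrak{S},\lambda,\parallel,\Gamma,\gamma)$ is called a functional $\Lambda$-system algebra over $\mathcal{X}$. It has unique fixed points if $|\mathrm{Fix}(s,i,o,\mathbf{x})|=1$ for all $s$, $\{i,o\}\in\Gamma(s)$, $\mathbf{x}$. $\Gamma$ permits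 reordering if for all $s$, $\{i,o\}\in\Gamma(s)$ and $\{i',o'\}\in\Gamma(\gamma_{i,o}(s))$ we have $\{i',o'\}\in\Gamma(s)$ and $\{i,o\}\in\Gamma(\gamma_{i',o'}(s))$; the algebra is connection-order invariant if $\Gamma$ permits reordering and in that situation $\gamma_{i',o'}(\gamma_{i,o}(s))=\gamma_{i,o}(\gamma_{i',o'}(s))$. *)

theory Defs
  imports Main
begin

text \<open>A system with input labels I, output labels O and underlying function
  X^I -> X^O.
  The function component is normalised to Map.empty outside X^I, so that
  equality of systems is equality of functions on X^I (together with I and O).\<close>

type_synonym ('l, 'x) sys = "'l set \<times> 'l set \<times> (('l \<rightharpoonup> 'x) \<Rightarrow> ('l \<rightharpoonup> 'x))"

definition ins :: "('l, 'x) sys \<Rightarrow> 'l set" where "ins s = fst s"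
definition outs :: "('l, 'x) sys \<Rightarrow> 'l set" where "outs s = fst (snd s)"
definition fn :: "('l, 'x) sys \<Rightarrow> ('l \<rightharpoonup> 'x) \<Rightarrow> ('l \<rightharpoonup> 'x)" where "fn s = snd (snd s)"

definition tuples :: "'x set \<Rightarrow> 'l set \<Rightarrow> ('l \<rightharpoonup> 'x) set" where
  "tuples X I = {m. dom m = I \<and> ran m \<subseteq> X}"

definition wf_sys :: "'x set \<Rightarrow> ('l, 'x) sys \<Rightarrow> bool" where
  "wf_sys X s \<longleftrightarrow> finite (ins s) \<and> finite (outs s) \<and> ins s \<inter> outs s = {}
     \<and> (\<forall>m \<in> tuples X (ins s). fn s m \<in> tuples X (outs s))
     \<and> (\<forall>m. m \<notin> tuples X (ins s) \<longrightarrow> fn s m = Map.empty)"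

definition lam :: "('l, 'x) sys \<Rightarrow> 'l set" where "lam s = ins s \<union> outs s"

definition Fix :: "'x set \<Rightarrow> ('l, 'x) sys \<Rightarrow> 'l \<Rightarrow> 'l \<Rightarrow> ('l \<rightharpoonup> 'x) \<Rightarrow> 'x set" where
  "Fix X s i ou x = {v \<in> X. fn s (x(i \<mapsto> v)) ou = Some v}"

definition par :: "'x set \<Rightarrow> ('l, 'x) sys \<Rightarrow> ('l, 'x) sys \<Rightarrow> ('l, 'x) sys" where
  "par X s1 s2 = (ins s1 \<union> ins s2, outs s1 \<union> outs s2,
     \<lambda>m. if m \<in> tuples X (ins s1 \<union> ins s2)
          then fn s1 (m |` ins s1) ++ fn s2 (m |` ins s2) else Map.empty)"

definition gam :: "'x set \<Rightarrow> (('l, 'x) sys \<Rightarrow> 'l \<Rightarrow> 'l \<Rightarrow> ('l \<rightharpoonup> 'x) \<Rightarrow> 'x)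
    \<Rightarrow> ('l, 'x) sys \<Rightarrow> 'l \<Rightarrow> 'l \<Rightarrow> ('l, 'x) sys" where
  "gam X phi s i ou = (ins s - {i}, outs s - {ou},
     \<lambda>m. if m \<in> tuples X (ins s - {i})
          then fn s (m(i \<mapsto> phi s i ou m)) |` (outs s - {ou}) else Map.empty)"

definition functional_system_algebra ::
  "'x set \<Rightarrow> ('l, 'x) sys set \<Rightarrow> (('l, 'x) sys \<Rightarrow> 'l set set)
    \<Rightarrow> (('l, 'x) sys \<Rightarrow> 'l \<Rightarrow> 'l \<Rightarrow> ('l \<rightharpoonup> 'x) \<Rightarrow> 'x) \<Rightarrow> bool" where
  "functional_system_algebra X S \<Gamma> phi \<longleftrightarrow>
     (\<forall>s \<in> S. wf_sys X s)
   \<and> (\<forall>s \<in> S. \<forall>c \<in> \<Gamma> s. \<exists>i \<in> ins s. \<exists>ou \<in> outs s. c = {i, ou})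
   \<and> (\<forall>s \<in> S. \<forall>i \<in> ins s. \<forall>ou \<in> outs s. {i, ou} \<in> \<Gamma> s \<longrightarrow>
        (\<forall>x \<in> tuples X (ins s - {i}). Fix X s i ou x \<noteq> {} \<and> phi s i ou x \<in> Fix X s i ou x))
   \<and> (\<forall>s1 \<in> S. \<forall>s2 \<in> S. ins s1 \<inter> ins s2 = {} \<and> ins s1 \<inter> outs s2 = {}
        \<and> outs s1 \<inter> ins s2 = {} \<and> outs s1 \<inter> outs s2 = {} \<longrightarrow> par X s1 s2 \<in> S)
   \<and> (\<forall>s \<in> S. \<forall>i \<in> ins s. \<forall>ou \<in> outs s. {i, ou} \<in> \<Gamma> s \<longrightarrow> gam X phi s i ou \<in> S)
   \<and> (\<forall>s1 \<in> S. \<forall>s2 \<in> S. lam s1 \<inter> lam s2 = {} \<longrightarrow>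
        (\<forall>sj \<in> {s1, s2}. \<forall>i \<in> lam sj. \<forall>ou \<in> lam sj.
           {i, ou} \<in> \<Gamma> (par X s1 s2) \<longleftrightarrow> {i, ou} \<in> \<Gamma> sj))"

definition unique_fixed_points ::
  "'x set \<Rightarrow> ('l, 'x) sys set \<Rightarrow> (('l, 'x) sys \<Rightarrow> 'l set set) \<Rightarrow> bool" where
  "unique_fixed_points X S \<Gamma> \<longleftrightarrow>
     (\<forall>s \<in> S. \<forall>i \<in> ins s. \<forall>ou \<in> outs s. {i, ou} \<in> \<Gamma> s \<longrightarrow>
        (\<forall>x \<in> tuples X (ins s - {i}). card (Fix X s i ou x) = 1))"

definition permits_reordering ::
  "'x set \<Rightarrow> ('l, 'x) sys set \<Rightarrow> (('l, 'x) sys \<Rightarrow> 'l set set)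
    \<Rightarrow> (('l, 'x) sys \<Rightarrow> 'l \<Rightarrow> 'l \<Rightarrow> ('l \<rightharpoonup> 'x) \<Rightarrow> 'x) \<Rightarrow> bool" where
  "permits_reordering X S \<Gamma> phi \<longleftrightarrow>
     (\<forall>s \<in> S. \<forall>i \<in> ins s. \<forall>ou \<in> outs s. \<forall>i' \<in> ins (gam X phi s i ou). \<forall>o' \<in> outs (gam X phi s i ou).
        {i, ou} \<in> \<Gamma> s \<and> {i', o'} \<in> \<Gamma> (gam X phi s i ou) \<longrightarrow>
        {i', o'} \<in> \<Gamma> s \<and> {i, ou} \<in> \<Gamma> (gam X phi s i' o'))"

definition connection_order_invariant ::
  "'x set \<Rightarrow> ('l, 'x) sys set \<Rightarrow> (('l, 'x) sys \<Rightarrow> 'l set set)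
    \<Rightarrow> (('l, 'x) sys \<Rightarrow> 'l \<Rightarrow> 'l \<Rightarrow> ('l \<rightharpoonup> 'x) \<Rightarrow> 'x) \<Rightarrow> bool" where
  "connection_order_invariant X S \<Gamma> phi \<longleftrightarrow>
     permits_reordering X S \<Gamma> phi \<and>
     (\<forall>s \<in> S. \<forall>i \<in> ins s. \<forall>ou \<in> outs s. \<forall>i' \<in> ins (gam X phi s i ou). \<forall>o' \<in> outs (gam X phi s i ou).
        {i, ou} \<in> \<Gamma> s \<and> {i', o'} \<in> \<Gamma> (gam X phi s i ou) \<longrightarrow>
        gam X phi (gam X phi s i ou) i' o' = gam X phi (gam X phi s i' o') i ou)"

end

theory Submission
  imports Defs
begin

text \<open>Closing the connections (i,ou) and (i',o') in either order evaluates s at a joint fixed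
  point (v,w): a pair with s(m, i := v, i' := w) returning v on ou and w on o'.  Closing (i,ou)
  first and then (i',o') produces such a pair; conversely, by uniqueness of fixed points, any
  such pair forces v = phi s i ou (m, i' := w) and then w = phi (gam s i ou) i' o' m.  So the
  joint fixed point is unique, and since the notion is symmetric in the two connections, both
  orders give the same system.\<close>

lemma ins_gam [simp]: "ins (gam X phi s i ou) = ins s - {i}"
  by (simp add: gam_def ins_def)

lemma outs_gam [simp]: "outs (gam X phi s i ou) = outs s - {ou}"
  by (simp add: gam_def outs_def)

lemma fn_gam: "fn (gam X phi s i ou) m = (if m \<in> tuples X (ins s - {i})
    then fn s (m(i \<mapsto> phi s i ou m)) |` (outs s - {ou}) else Map.empty)"
  by (simp add: gam_def fn_def ins_def outs_def)

lemma sys_eqI: "ins s = ins t \<Longrightarrow> outs s = outs t \<Longrightarrow> (\<And>m. fn s m = fn t m) \<Longrightarrow> s = t"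
  by (simp add: ins_def outs_def fn_def prod_eq_iff fun_eq_iff)

lemma tuples_upd: "m \<in> tuples X (A - {i}) \<Longrightarrow> v \<in> X \<Longrightarrow> i \<in> A \<Longrightarrow> m(i \<mapsto> v) \<in> tuples X A"
  unfolding tuples_def by (auto simp: ran_def)

definition joint_fixpoint :: "'x set \<Rightarrow> ('l, 'x) sys \<Rightarrow> 'l \<Rightarrow> 'l \<Rightarrow> 'l \<Rightarrow> 'l
    \<Rightarrow> ('l \<rightharpoonup> 'x) \<Rightarrow> 'x \<Rightarrow> 'x \<Rightarrow> bool" where
  "joint_fixpoint X s i ou i' o' m v w \<longleftrightarrow> v \<in> X \<and> w \<in> X
     \<and> fn s (m(i \<mapsto> v, i' \<mapsto> w)) ou = Some v \<and> fn s (m(i \<mapsto> v, i' \<mapsto> w)) o' = Some w"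

lemma joint_fixpoint_swap:
  "i \<noteq> i' \<Longrightarrow> joint_fixpoint X s i ou i' o' m v w = joint_fixpoint X s i' o' i ou m w v"
  unfolding joint_fixpoint_def by (auto simp: fun_upd_twist)

lemma joint_fixpoint_exists:
  assumes i: "i \<in> ins s" and i': "i' \<in> ins s" "i' \<noteq> i" and o': "o' \<in> outs s" "o' \<noteq> ou"
    and m: "m \<in> tuples X (ins s - {i} - {i'})"
    and fix_s: "\<And>x. x \<in> tuples X (ins s - {i}) \<Longrightarrow> Fix X s i ou x = {phi s i ou x}"
    and fix_t: "Fix X (gam X phi s i ou) i' o' m = {phi (gam X phi s i ou) i' o' m}"
  shows "\<exists>v w. joint_fixpoint X s i ou i' o' m v w"
proof -
  define w where "w = phi (gam X phi s i ou) i' o' m"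
  define v where "v = phi s i ou (m(i' \<mapsto> w))"
  have w: "w \<in> Fix X (gam X phi s i ou) i' o' m"
    using fix_t by (simp add: w_def)
  then have mw: "m(i' \<mapsto> w) \<in> tuples X (ins s - {i})"
    using m i' by (intro tuples_upd) (auto simp: Fix_def)
  then have v: "v \<in> Fix X s i ou (m(i' \<mapsto> w))"
    using fix_s by (simp add: v_def)
  have "fn s (m(i' \<mapsto> w, i \<mapsto> v)) o' = Some w"
    using w mw o' by (simp add: Fix_def fn_gam v_def)
  with v w i' show ?thesis
    unfolding joint_fixpoint_def Fix_def by (auto simp: fun_upd_twist)
qed

lemma fn_gam_gam_at_joint_fixpoint:
  assumes i: "i \<in> ins s" and i': "i' \<in> ins s" "i' \<noteq> i" and o': "o' \<in> outs s" "o' \<noteq> ou"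
    and m: "m \<in> tuples X (ins s - {i} - {i'})"
    and fix_s: "\<And>x. x \<in> tuples X (ins s - {i}) \<Longrightarrow> Fix X s i ou x = {phi s i ou x}"
    and fix_t: "Fix X (gam X phi s i ou) i' o' m = {phi (gam X phi s i ou) i' o' m}"
    and joint: "joint_fixpoint X s i ou i' o' m v w"
  shows "fn (gam X phi (gam X phi s i ou) i' o') m
    = fn s (m(i \<mapsto> v, i' \<mapsto> w)) |` (outs s - {ou} - {o'})"
proof -
  have swap: "m(i' \<mapsto> w, i \<mapsto> v) = m(i \<mapsto> v, i' \<mapsto> w)"
    using i' by (simp add: fun_upd_twist)
  have mw: "m(i' \<mapsto> w) \<in> tuples X (ins s - {i})"
    using m i' joint by (intro tuples_upd) (auto simp: joint_fixpoint_def)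
  have "v \<in> Fix X s i ou (m(i' \<mapsto> w))"
    using joint swap by (simp add: joint_fixpoint_def Fix_def)
  then have v: "phi s i ou (m(i' \<mapsto> w)) = v"
    using fix_s[OF mw] by simp
  have "w \<in> Fix X (gam X phi s i ou) i' o' m"
    using joint swap mw v o' by (simp add: joint_fixpoint_def Fix_def fn_gam)
  then have w: "phi (gam X phi s i ou) i' o' m = w"
    using fix_t by simp
  show ?thesis
    using m mw i' by (simp add: fn_gam w v swap Int_absorb1 Diff_subset)
qed

lemma phi_in_Fix:
  assumes "functional_system_algebra X S \<Gamma> phi"
    and "s \<in> S" "i \<in> ins s" "ou \<in> outs s" "{i, ou} \<in> \<Gamma> s" "x \<in> tuples X (ins s - {i})"
  shows "phi s i ou x \<in> Fix X s i ou x"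
  using assms(1) unfolding functional_system_algebra_def by (simp add: assms(2-6))

lemma gam_closed:
  assumes "functional_system_algebra X S \<Gamma> phi"
    and "s \<in> S" "i \<in> ins s" "ou \<in> outs s" "{i, ou} \<in> \<Gamma> s"
  shows "gam X phi s i ou \<in> S"
  using assms(1) unfolding functional_system_algebra_def by (simp add: assms(2-5))

lemma Fix_eq_phi:
  assumes alg: "functional_system_algebra X S \<Gamma> phi" and "unique_fixed_points X S \<Gamma>"
    and "s \<in> S" "i \<in> ins s" "ou \<in> outs s" "{i, ou} \<in> \<Gamma> s" "x \<in> tuples X (ins s - {i})"
  shows "Fix X s i ou x = {phi s i ou x}"
proof -
  have "card (Fix X s i ou x) = 1"
    using assms(2) unfolding unique_fixed_points_def by (simp add: assms(3-7))
  then show ?thesis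
    using phi_in_Fix[OF alg assms(3-7)] by (metis card_1_singletonE singletonD)
qed

lemma gam_gam_commute:
  assumes alg: "functional_system_algebra X S \<Gamma> phi" and ufp: "unique_fixed_points X S \<Gamma>"
    and s: "s \<in> S" and i: "i \<in> ins s" "i' \<in> ins s" "i' \<noteq> i"
    and out: "ou \<in> outs s" "o' \<in> outs s" "o' \<noteq> ou"
    and conn: "{i, ou} \<in> \<Gamma> s" "{i', o'} \<in> \<Gamma> s"
      "{i', o'} \<in> \<Gamma> (gam X phi s i ou)" "{i, ou} \<in> \<Gamma> (gam X phi s i' o')"
  shows "gam X phi (gam X phi s i ou) i' o' = gam X phi (gam X phi s i' o') i ou"
proof (rule sys_eqI)
  have closed: "gam X phi s i ou \<in> S" "gam X phi s i' o' \<in> S"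
    using gam_closed[OF alg s] i out conn by blast+
  note Fix_phi = Fix_eq_phi[OF alg ufp]
  have ins_comm: "ins s - {i'} - {i} = ins s - {i} - {i'}" by auto
  then show "ins (gam X phi (gam X phi s i ou) i' o') = ins (gam X phi (gam X phi s i' o') i ou)"
    by simp
  have outs_comm: "outs s - {o'} - {ou} = outs s - {ou} - {o'}" by auto
  then show "outs (gam X phi (gam X phi s i ou) i' o') = outs (gam X phi (gam X phi s i' o') i ou)"
    by simp
  show "fn (gam X phi (gam X phi s i ou) i' o') m = fn (gam X phi (gam X phi s i' o') i ou) m"
    for m
  proof (cases "m \<in> tuples X (ins s - {i} - {i'})")
    case m: True
    have m': "m \<in> tuples X (ins s - {i'} - {i})"
      using m ins_comm by simp
    have fix_s: "\<And>x. x \<in> tuples X (ins s - {i}) \<Longrightarrow> Fix X s i ou x = {phi s i ou x}"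
      and fix_s': "\<And>x. x \<in> tuples X (ins s - {i'}) \<Longrightarrow> Fix X s i' o' x = {phi s i' o' x}"
      using Fix_phi[OF s] i out conn by blast+
    have fix_t: "Fix X (gam X phi s i ou) i' o' m = {phi (gam X phi s i ou) i' o' m}"
      and fix_t': "Fix X (gam X phi s i' o') i ou m = {phi (gam X phi s i' o') i ou m}"
      using Fix_phi[OF closed(1)] Fix_phi[OF closed(2)] m m' i out conn by auto
    obtain v w where joint: "joint_fixpoint X s i ou i' o' m v w"
      using joint_fixpoint_exists[OF i(1,2,3) out(2,3) m fix_s fix_t] by blast
    have joint': "joint_fixpoint X s i' o' i ou m w v"
      by (rule joint_fixpoint_swap[OF i(3)[symmetric], THEN iffD1, OF joint])
    have "fn (gam X phi (gam X phi s i ou) i' o') m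
        = fn s (m(i \<mapsto> v, i' \<mapsto> w)) |` (outs s - {ou} - {o'})"
      by (rule fn_gam_gam_at_joint_fixpoint[OF i(1,2,3) out(2,3) m fix_s fix_t joint])
    also have "\<dots> = fn s (m(i' \<mapsto> w, i \<mapsto> v)) |` (outs s - {o'} - {ou})"
      by (simp add: fun_upd_twist[OF i(3)] outs_comm)
    also have "\<dots> = fn (gam X phi (gam X phi s i' o') i ou) m"
      by (rule fn_gam_gam_at_joint_fixpoint[OF i(2,1) i(3)[symmetric] out(1) out(3)[symmetric]
            m' fix_s' fix_t' joint', symmetric])
    finally show ?thesis .
  next
    case False
    then show ?thesis
      by (simp add: fn_gam ins_comm)
  qed
qed

theorem lemma4p4:
  fixes X :: "'x set" and S :: "('l, 'x) sys set"
    and \<Gamma> :: "('l, 'x) sys \<Rightarrow> 'l set set"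
    and phi :: "('l, 'x) sys \<Rightarrow> 'l \<Rightarrow> 'l \<Rightarrow> ('l \<rightharpoonup> 'x) \<Rightarrow> 'x"
  assumes "functional_system_algebra X S \<Gamma> phi"
    and "unique_fixed_points X S \<Gamma>"
    and "permits_reordering X S \<Gamma> phi"
  shows "connection_order_invariant X S \<Gamma> phi"
  unfolding connection_order_invariant_def
proof (intro conjI assms(3) ballI impI)
  fix s i ou i' o'
  assume s: "s \<in> S" and i: "i \<in> ins s" and ou: "ou \<in> outs s"
    and i': "i' \<in> ins (gam X phi s i ou)" and o': "o' \<in> outs (gam X phi s i ou)"
    and conn: "{i, ou} \<in> \<Gamma> s \<and> {i', o'} \<in> \<Gamma> (gam X phi s i ou)"
  have reordered: "{i', o'} \<in> \<Gamma> s" "{i, ou} \<in> \<Gamma> (gam X phi s i' o')"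
    using assms(3) s i ou i' o' conn unfolding permits_reordering_def by blast+
  have "i' \<in> ins s" "i' \<noteq> i" "o' \<in> outs s" "o' \<noteq> ou"
    using i' o' by auto
  with s i ou conn reordered
  show "gam X phi (gam X phi s i ou) i' o' = gam X phi (gam X phi s i' o') i ou"
    by (intro gam_gam_commute[OF assms(1,2)]) auto
qed

end
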